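(* Let $n\ge1$. For a word $w$ over $\{a,b\}$ the following are equivalent: (1) $w\in L^{\epsilon}_{\vdash_{\{a^nb,\,a^n\}}}$; (2) $|w|_a\equiv 0 \pmod n$ and every prefix $p$ of $w$ satisfies $|p|_a\ge n|p|_b$; (3) $w\in L^{\epsilon}_{\{a^nb,\,a^n\}}$. In particular $L^{\epsilon}_{\vdash_{\{a^nb,a^n\}}}=L^{\epsilon}_{\{a^nb,a^n\}}$.
   Context: For words $u,v$, the shuffle $u \sqcup\!\sqcup v$ is the set of all words $u_1v_1\cdots u_kv_k$ with $k\ge 1$, $u=u_1\cdots u_k$, $v=v_1\cdots v_k$ (pieces possibly empty). For a finite set $I$ of words, $v \vdash_I w$ means $w \in v \sqcup\!\sqcup u$ for some $u\in I$; $\vdash_I^*$ is its reflexive-transitive closure and $L^{\epsilon}_{\vdash_I}=\{w : \epsilon \vdash_I^* w\}$. The relation $\Rightarrow_I$ is defined by $xy\Rightarrow_I xuy$ for all words $x,y$ and $u\in I$ (insertion of a word of $I$ as a factor), $\Rightarrow^*_I$ is its reflexive-transitive closure, and $L^{\epsilon}_{I}=\{w:\epsilon\Rightarrow_I^* w\}$. *)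

theory Defs
  imports Main "HOL-Library.Sublist"
begin

datatype ab = a | b

definition shuffle :: "'x list \<Rightarrow> 'x list \<Rightarrow> 'x list set" where
  "shuffle u v = {w. \<exists>us vs. length us = length vs \<and> length us \<ge> 1 \<and>
      concat us = u \<and> concat vs = v \<and>
      w = concat (map (\<lambda>(x, y). x @ y) (zip us vs))}"

definition shuf_step :: "'x list set \<Rightarrow> 'x list \<Rightarrow> 'x list \<Rightarrow> bool" where
  "shuf_step I v w \<longleftrightarrow> (\<exists>u\<in>I. w \<in> shuffle v u)"

definition shuf_lang :: "'x list set \<Rightarrow> 'x list set" where
  "shuf_lang I = {w. (shuf_step I)\<^sup>*\<^sup>* [] w}"

definition ins_step :: "'x list set \<Rightarrow> 'x list \<Rightarrow> 'x list \<Rightarrow> bool" where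
  "ins_step I v w \<longleftrightarrow> (\<exists>x y u. u \<in> I \<and> v = x @ y \<and> w = x @ u @ y)"

definition ins_lang :: "'x list set \<Rightarrow> 'x list set" where
  "ins_lang I = {w. (ins_step I)\<^sup>*\<^sup>* [] w}"

end

theory Submission
  imports Defs
begin

text \<open>Shuffling a word of I into a word preserves both the divisibility of the number
of a's by n and the prefix condition, because a prefix of a shuffle is a shuffle of
prefixes and both words of I satisfy the condition. Conversely, a nonempty word
satisfying (2) contains a factor from I whose removal preserves (2): the factor
a^n b ending at its first b, or a trailing a^n if it has no b. So (2) implies (3)
by induction on the length, and (3) implies (1) because an insertion is a special
shuffle.\<close>

lemma append_in_shuffles_appendI:
  "zs \<in> shuffles xs ys \<Longrightarrow> zs' \<in> shuffles xs' ys' \<Longrightarrow> zs @ zs' \<in> shuffles (xs @ xs') (ys @ ys')"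
  by (induction zs arbitrary: xs ys) (auto simp: Cons_in_shuffles_iff)

lemma append_in_shuffles: "xs @ ys \<in> shuffles xs ys"
  using append_in_shuffles_appendI[of xs xs "[]" ys "[]" ys] by simp

lemma shuffle_subset_shuffles: "shuffle xs ys \<subseteq> shuffles xs ys"
proof -
  have "concat (map (\<lambda>(x, y). x @ y) (zip us vs)) \<in> shuffles (concat us) (concat vs)"
    if "length us = length vs" for us vs :: "'a list list"
    using that
    by (induction us vs rule: list_induct2)
      (simp_all, metis append.assoc append_in_shuffles_appendI append_in_shuffles)
  then show ?thesis unfolding shuffle_def by auto
qed

lemma count_list_shuffles:
  "zs \<in> shuffles xs ys \<Longrightarrow> count_list zs c = count_list xs c + count_list ys c"
  by (induction xs ys arbitrary: zs rule: shuffles.induct) auto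

lemma prefix_of_shuffles:
  "zs \<in> shuffles xs ys \<Longrightarrow> prefix p zs \<Longrightarrow>
    \<exists>p1 p2. prefix p1 xs \<and> prefix p2 ys \<and> p \<in> shuffles p1 p2"
proof (induction zs arbitrary: xs ys p)
  case Nil
  then show ?case by simp
next
  case (Cons z zs)
  show ?case
  proof (cases p)
    case Nil
    then show ?thesis by auto
  next
    case (Cons z' p')
    with Cons.prems have p: "p = z # p'" "prefix p' zs" by auto
    from Cons.prems(1) consider
        (left) xs' where "xs = z # xs'" "zs \<in> shuffles xs' ys"
      | (right) ys' where "ys = z # ys'" "zs \<in> shuffles xs ys'"
      by (cases xs; cases ys) (auto simp: Cons_in_shuffles_iff)
    then show ?thesis
    proof cases
      case left
      with Cons.IH p obtain p1 p2 where "prefix p1 xs'" "prefix p2 ys" "p' \<in> shuffles p1 p2"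
        by blast
      with left p show ?thesis
        by (intro exI[of _ "z # p1"] exI[of _ p2]) (simp add: Cons_in_shuffles_leftI)
    next
      case right
      with Cons.IH p obtain p1 p2 where "prefix p1 xs" "prefix p2 ys'" "p' \<in> shuffles p1 p2"
        by blast
      with right p show ?thesis
        by (intro exI[of _ p1] exI[of _ "z # p2"]) (simp add: Cons_in_shuffles_rightI)
    qed
  qed
qed

lemma count_list_replicate [simp]:
  "count_list (replicate k x) y = (if x = y then k else 0)"
  by (induction k) auto

definition ballot :: "nat \<Rightarrow> ab list \<Rightarrow> bool" where
  "ballot n w \<longleftrightarrow> (\<forall>p. prefix p w \<longrightarrow> n * count_list p b \<le> count_list p a)"

lemma ballot_snoc:
  "ballot n (w @ [c]) \<longleftrightarrow> ballot n w \<and> n * count_list (w @ [c]) b \<le> count_list (w @ [c]) a"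
  unfolding ballot_def by (auto simp: prefix_snoc)

lemma ballot_replicate_a: "ballot n (replicate m a)"
proof -
  have "count_list p b = 0" if "prefix p (replicate m a)" for p
    using set_mono_prefix[OF that] by (auto simp: count_list_0_iff)
  then show ?thesis unfolding ballot_def by simp
qed

lemma ballot_shuffles:
  assumes "zs \<in> shuffles xs ys" "ballot n xs" "ballot n ys"
  shows "ballot n zs"
  unfolding ballot_def
proof (intro allI impI)
  fix p assume "prefix p zs"
  then obtain p1 p2 where "prefix p1 xs" "prefix p2 ys" and p: "p \<in> shuffles p1 p2"
    using assms(1) prefix_of_shuffles by blast
  then have "n * count_list p1 b \<le> count_list p1 a" "n * count_list p2 b \<le> count_list p2 a"
    using assms(2,3) unfolding ballot_def by blast+
  then show "n * count_list p b \<le> count_list p a"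
    by (simp add: count_list_shuffles[OF p] add_mult_distrib2)
qed

lemma ballot_remove_balanced_factor:
  assumes "ballot n (x @ u @ y)" "n * count_list u b = count_list u a"
  shows "ballot n (x @ y)"
  unfolding ballot_def
proof (intro allI impI)
  fix p assume "prefix p (x @ y)"
  then consider "prefix p x" | q where "p = x @ q" "prefix q y"
    by (auto simp: prefix_append)
  then show "n * count_list p b \<le> count_list p a"
  proof cases
    case 1
    then show ?thesis
      using assms(1) unfolding ballot_def by (meson prefix_order.trans prefix_append)
  next
    case 2
    then have "prefix (x @ u @ q) (x @ u @ y)" by simp
    then have "n * count_list (x @ u @ q) b \<le> count_list (x @ u @ q) a"
      using assms(1) unfolding ballot_def by blast
    then show ?thesis using 2(1) assms(2) by (simp add: add_mult_distrib2)
  qed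
qed

text \<open>The ballot condition at the prefix ending in the first b forces at least n a's before it.\<close>

lemma ballot_split_first_b:
  assumes "ballot n w" "b \<in> set w"
  obtains x y where "w = x @ (replicate n a @ [b]) @ y"
proof -
  obtain xs y where w: "w = xs @ b # y" and "b \<notin> set xs"
    using split_list_first[OF assms(2)] by blast
  then have xs: "xs = replicate (length xs) a"
    by (metis ab.exhaust replicate_length_same)
  have "prefix (xs @ [b]) w" using w by simp
  then have "n * count_list (xs @ [b]) b \<le> count_list (xs @ [b]) a"
    using assms(1) unfolding ballot_def by blast
  then have "n \<le> length xs"
    using \<open>b \<notin> set xs\<close> count_le_length[of xs a] by (simp add: count_list_0_iff)
  then have "w = replicate (length xs - n) a @ (replicate n a @ [b]) @ y"
    by (subst w, subst xs) (simp add: replicate_add[symmetric])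
  then show ?thesis using that by blast
qed

lemma ballot_reduce:
  assumes "n dvd count_list w a" "ballot n w" "w \<noteq> []"
  obtains x u y where "u \<in> {replicate n a @ [b], replicate n a}" "w = x @ u @ y"
    "n dvd count_list (x @ y) a" "ballot n (x @ y)"
proof -
  have "\<exists>x u y. u \<in> {replicate n a @ [b], replicate n a} \<and> w = x @ u @ y \<and> ballot n (x @ y)"
  proof (cases "b \<in> set w")
    case True
    then obtain x y where w: "w = x @ (replicate n a @ [b]) @ y"
      using assms(2) ballot_split_first_b by blast
    then have "ballot n (x @ y)"
      using assms(2) ballot_remove_balanced_factor[of n x "replicate n a @ [b]" y] by simp
    with w show ?thesis by blast
  next
    case False
    then have w: "w = replicate (length w) a"
      by (metis ab.exhaust replicate_length_same)
    then have "n \<le> length w"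
      using assms(1,3) by (metis count_list_replicate dvd_imp_le length_greater_0_conv)
    then have "w = replicate (length w - n) a @ replicate n a @ []"
      by (subst w) (simp add: replicate_add[symmetric])
    then show ?thesis
      by (intro exI[of _ "replicate (length w - n) a"] exI[of _ "replicate n a"] exI[of _ "[]"])
        (simp add: ballot_replicate_a)
  qed
  then obtain x u y where u: "u \<in> {replicate n a @ [b], replicate n a}" and w: "w = x @ u @ y"
    and "ballot n (x @ y)"
    by blast
  moreover have "count_list u a = n"
    using u by auto
  with w have "count_list (x @ y) a = count_list w a - n"
    by simp
  with assms(1) have "n dvd count_list (x @ y) a"
    by simp
  ultimately show ?thesis
    using that by blast
qed

lemma ballot_in_ins_lang:
  assumes "n \<ge> 1" and I: "replicate n a @ [b] \<in> I" "replicate n a \<in> I"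
    and "n dvd count_list w a" "ballot n w"
  shows "w \<in> ins_lang I"
  using assms(4,5)
proof (induction "length w" arbitrary: w rule: less_induct)
  case less
  show ?case
  proof (cases "w = []")
    case True
    then show ?thesis by (simp add: ins_lang_def)
  next
    case False
    obtain x u y where u: "u \<in> {replicate n a @ [b], replicate n a}" and w: "w = x @ u @ y"
      and "n dvd count_list (x @ y) a" "ballot n (x @ y)"
      using less.prems False by (rule ballot_reduce)
    moreover have "length (x @ y) < length w"
      using u w \<open>n \<ge> 1\<close> by auto
    ultimately have "x @ y \<in> ins_lang I"
      using less.hyps by blast
    moreover have "ins_step I (x @ y) w"
      unfolding ins_step_def using u w I by blast
    ultimately show ?thesis
      unfolding ins_lang_def by (simp add: rtranclp.rtrancl_into_rtrancl)
  qed
qed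

lemma ins_lang_subset_shuf_lang: "ins_lang I \<subseteq> shuf_lang I"
proof -
  have "x @ u @ y \<in> shuffle (x @ y) u" for x y u :: "'a list"
    unfolding shuffle_def by (rule CollectI, rule exI[of _ "[x, y]"], rule exI[of _ "[u, []]"]) simp
  then have "ins_step I \<le> shuf_step I"
    unfolding ins_step_def shuf_step_def by blast
  then show ?thesis
    unfolding ins_lang_def shuf_lang_def using rtranclp_mono by blast
qed

lemma shuf_lang_ballot:
  assumes "\<forall>u\<in>I. n dvd count_list u a \<and> ballot n u" and "w \<in> shuf_lang I"
  shows "n dvd count_list w a \<and> ballot n w"
proof -
  have "(shuf_step I)\<^sup>*\<^sup>* [] w"
    using assms(2) by (simp add: shuf_lang_def)
  then show ?thesis
  proof (induction rule: rtranclp_induct)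
    case base
    then show ?case by (simp add: ballot_def)
  next
    case (step v w)
    then obtain u where "u \<in> I" "w \<in> shuffles v u"
      unfolding shuf_step_def using shuffle_subset_shuffles by blast
    then show ?case
      using step.IH assms(1) count_list_shuffles ballot_shuffles by fastforce
  qed
qed

theorem lemma13:
  fixes n :: nat and w :: "ab list"
  assumes "n \<ge> 1"
  defines "I \<equiv> {replicate n a @ [b], replicate n a}"
  shows "(w \<in> shuf_lang I \<longleftrightarrow>
           (count_list w a mod n = 0 \<and>
            (\<forall>p. prefix p w \<longrightarrow> count_list p a \<ge> n * count_list p b)))
       \<and> (w \<in> shuf_lang I \<longleftrightarrow> w \<in> ins_lang I)
       \<and> shuf_lang I = ins_lang I"
proof -
  have "\<forall>u\<in>I. n dvd count_list u a \<and> ballot n u"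
    unfolding I_def by (simp add: ballot_snoc ballot_replicate_a)
  then have shuf: "v \<in> shuf_lang I \<Longrightarrow> n dvd count_list v a \<and> ballot n v" for v
    using shuf_lang_ballot by blast
  have ins: "n dvd count_list v a \<Longrightarrow> ballot n v \<Longrightarrow> v \<in> ins_lang I" for v
    using ballot_in_ins_lang[OF assms(1)] unfolding I_def by blast
  have "w \<in> shuf_lang I \<longleftrightarrow> n dvd count_list w a \<and> ballot n w"
    using shuf ins ins_lang_subset_shuf_lang by blast
  moreover have "shuf_lang I = ins_lang I"
    using shuf ins ins_lang_subset_shuf_lang by blast
  ultimately show ?thesis
    unfolding ballot_def dvd_eq_mod_eq_0 by simp
qed

end
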